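(* Consider $n$ flows sharing a server that performs interleaved weighted round robin (IWRR) with positive integer weights $w_1,\dots,w_n$, and fix a flow of interest $f_i$. Then for every backlogged period $(s,t]$ of $f_i$ and every $j\neq i$, \[ \frac{D_i(s,t)}{w_i l_i^{\min}} \;\geq\; \frac{\big[D_j(s,t)-w_j l_j^{\max}\big]^+}{w_j l_j^{\max}}, \] i.e. IWRR is a bandwidth-sharing policy for $f_i$ with the same weights $\phi_i'=w_i l_i^{\min}$, $\phi_j'=w_j l_j^{\max}$ ($j\ne i$) and penalty terms $H_{ij}'=w_j l_j^{\max}\mathbb{1}_{\{i\neq j\}}$ as for WRR.
   Context: Each flow $f_k$ sends packets with sizes in $[l_k^{\min},l_k^{\max}]$, $0<l_k^{\min}\le l_k^{\max}$, queued FIFO in a per-flow queue. IWRR: let $w_{\max}=\max_k w_k$. The server runs rounds forever; each round consists of cycles $c=1,\dots,w_{\max}$; in cycle $c$ the server visits flows $k=1,\dots,n$ in order and, if queue $k$ is nonempty and $c\le w_k$, transmits (non-preemptively) exactly one packet from the head of queue $k$. $D_k(t)$ is the cumulative data of flow $k$ that has left the server in $[0,t)$, $A_k(t)$ the cumulative arrivals, $D_k\le A_k$, $D_k(s,t):=D_k(t)-D_k(s)$. An interval $(s,t]$ is a backlogged period of $f_i$ if $D_i(\tau)<A_i(\tau)$ for all $\tau\in(s,t]$. $[x]^+:=\max\{x,0\}$. A server has a bandwidth-sharing policy if there exist weights $\phi_k>0$ and numbers $H_{ij}\ge0$ such that for every backlogged period $(s,t]$ of $f_i$ and all $j\neq i$: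 $D_i(s,t)/\phi_i\ge[D_j(s,t)-H_{ij}]^+/\phi_j$. *)

theory Defs
  imports Complex_Main
begin

text \<open>Flows are indexed 0..<n (the paper's 1..n); server visits them in this order.
  Packet p (p = 0,1,2,...) of flow k has arrival time arr k p and length len k p.\<close>

definition iwrr_round :: "nat \<Rightarrow> (nat \<Rightarrow> nat) \<Rightarrow> nat list" where
  "iwrr_round n w =
     concat (map (\<lambda>c. filter (\<lambda>k. c \<le> w k) [0..<n]) [1..<Suc (Max (w ` {..<n}))])"

definition slot_flow :: "nat \<Rightarrow> (nat \<Rightarrow> nat) \<Rightarrow> nat \<Rightarrow> nat" where
  "slot_flow n w m = iwrr_round n w ! (m mod length (iwrr_round n w))"

definition served :: "nat \<Rightarrow> (nat \<Rightarrow> nat) \<Rightarrow> (nat \<Rightarrow> bool) \<Rightarrow> nat \<Rightarrow> nat \<Rightarrow> nat" where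
  "served n w busy k m = card {m'. m' < m \<and> slot_flow n w m' = k \<and> busy m'}"

text \<open>An execution of the IWRR server: slot m is visited at time v m; busy m holds iff the
  queue of the visited flow is nonempty at the visit (some arrived packet not yet transmitted);
  in that case the head packet is transmitted non-preemptively during [v m, fin m) and the
  next visit happens no earlier than fin m.\<close>
definition iwrr_exec ::
  "nat \<Rightarrow> (nat \<Rightarrow> nat) \<Rightarrow> (nat \<Rightarrow> nat \<Rightarrow> real) \<Rightarrow> (nat \<Rightarrow> real) \<Rightarrow> (nat \<Rightarrow> bool)
     \<Rightarrow> (nat \<Rightarrow> real) \<Rightarrow> bool" where
  "iwrr_exec n w arr v busy fin \<longleftrightarrow>
     (\<forall>m. v m \<le> v (Suc m)) \<and>
     (\<forall>m. busy m \<longleftrightarrow>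
          served n w busy (slot_flow n w m) m < card {p. arr (slot_flow n w m) p \<le> v m}) \<and>
     (\<forall>m. busy m \<longrightarrow> v m < fin m \<and> fin m \<le> v (Suc m))"

definition cum_arr :: "(nat \<Rightarrow> nat \<Rightarrow> real) \<Rightarrow> (nat \<Rightarrow> nat \<Rightarrow> real) \<Rightarrow> nat \<Rightarrow> real \<Rightarrow> real" where
  "cum_arr arr len k t = (\<Sum>p\<in>{p. arr k p < t}. len k p)"

text \<open>Cumulative departures D_k(t): data of flow k whose transmission has completed before t.
  The packet transmitted in a busy slot m of flow k is the (served ... k m)-th packet (FIFO).\<close>
definition cum_dep ::
  "nat \<Rightarrow> (nat \<Rightarrow> nat) \<Rightarrow> (nat \<Rightarrow> bool) \<Rightarrow> (nat \<Rightarrow> real) \<Rightarrow> (nat \<Rightarrow> nat \<Rightarrow> real)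
     \<Rightarrow> nat \<Rightarrow> real \<Rightarrow> real" where
  "cum_dep n w busy fin len k t =
     (\<Sum>m\<in>{m. busy m \<and> slot_flow n w m = k \<and> fin m < t}. len k (served n w busy k m))"

definition pos_part :: "real \<Rightarrow> real" where
  "pos_part x = max x 0"

end

theory Submission
  imports Defs
begin

text \<open>While f_i is backlogged, every visit of the server to queue i finds it nonempty.
  Take the first and last slots a, b in which f_j completes a packet in [s, t), and let q be
  the number of full rounds between them. The slots a..b lie in q + 1 rounds, so f_j sends at
  most (q + 1) w_j packets; the q full rounds after a contain q w_i visits to queue i, all
  strictly between a and b, hence all transmitting packets of f_i that leave within [s, t).
  Bounding the packet sizes of f_i below by lmin i and those of f_j above by lmax j
  gives the inequality.\<close>

lemma card_periodic_window:
  fixes P :: "nat \<Rightarrow> bool"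
  assumes periodic: "\<And>m. P (m + L) \<longleftrightarrow> P m"
  shows "card {m \<in> {p..<p + L}. P m} = card {m \<in> {..<L}. P m}"
proof (induction p)
  case 0
  then show ?case by (simp add: atLeast0LessThan)
next
  case (Suc p)
  show ?case
  proof (cases "P p")
    case True
    have "insert p {m \<in> {Suc p..<Suc p + L}. P m} = insert (p + L) {m \<in> {p..<p + L}. P m}"
      using True periodic[of p] by auto
    then have "card (insert p {m \<in> {Suc p..<Suc p + L}. P m})
             = card (insert (p + L) {m \<in> {p..<p + L}. P m})" by simp
    then show ?thesis using Suc.IH by simp
  next
    case False
    then have "{m \<in> {Suc p..<Suc p + L}. P m} = {m \<in> {p..<p + L}. P m}"
      using periodic[of p] by (auto simp: le_less Suc_le_eq less_Suc_eq)
    then show ?thesis using Suc.IH by simp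
  qed
qed

lemma card_periodic_windows:
  fixes P :: "nat \<Rightarrow> bool"
  assumes periodic: "\<And>m. P (m + L) \<longleftrightarrow> P m"
  shows "card {m \<in> {p..<p + q * L}. P m} = q * card {m \<in> {..<L}. P m}"
proof (induction q)
  case 0
  then show ?case by simp
next
  case (Suc q)
  have "{m \<in> {p..<p + Suc q * L}. P m}
      = {m \<in> {p..<p + q * L}. P m} \<union> {m \<in> {p + q * L..<p + q * L + L}. P m}"
    by auto
  moreover have "card \<dots> = card {m \<in> {p..<p + q * L}. P m}
                          + card {m \<in> {p + q * L..<p + q * L + L}. P m}"
    by (rule card_Un_disjoint) auto
  ultimately show ?case
    using Suc.IH card_periodic_window[of P L "p + q * L", OF periodic] by simp
qed

lemma finite_gap_above:
  fixes S :: "'a::linorder set"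
  assumes "finite S" "x < t"
  obtains \<tau> where "x < \<tau>" "\<tau> \<le> t" "\<And>y. y \<in> S \<Longrightarrow> y < \<tau> \<Longrightarrow> y \<le> x"
proof
  let ?\<tau> = "Min (insert t {y \<in> S. x < y})"
  have fin: "finite (insert t {y \<in> S. x < y})" using assms(1) by simp
  show "x < ?\<tau>" using fin assms(2) by simp
  show "?\<tau> \<le> t" using fin by simp
  show "y \<le> x" if "y \<in> S" "y < ?\<tau>" for y
  proof (rule ccontr)
    assume "\<not> y \<le> x"
    have "?\<tau> \<le> y" by (rule Min_le[OF fin]) (use that(1) \<open>\<not> y \<le> x\<close> in auto)
    then show False using that(2) by simp
  qed
qed

lemma mono_sublevel_subset_lessThan:
  fixes f :: "nat \<Rightarrow> 'a::order"
  assumes "mono f" "finite {p. f p \<le> x}"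
  shows "{p. f p \<le> x} \<subseteq> {..<card {p. f p \<le> x}}"
proof
  fix p assume "p \<in> {p. f p \<le> x}"
  then have "{..p} \<subseteq> {p. f p \<le> x}" using monoD[OF assms(1)] by (auto intro: order_trans)
  then have "card {..p} \<le> card {p. f p \<le> x}" using assms(2) by (rule card_mono[rotated])
  then show "p \<in> {..<card {p. f p \<le> x}}" by simp
qed

lemma bandwidth_share_arith:
  fixes wi wj cI cJ :: nat and lI lJ DI DJ :: real
  assumes pos: "0 < wi" "0 < wj" "0 < lI" "0 < lJ"
    and count: "wi * cJ \<le> wi * wj + wj * cI"
    and DJ: "DJ \<le> cJ * lJ" and DI: "cI * lI \<le> DI"
  shows "pos_part (DJ - wj * lJ) / (wj * lJ) \<le> DI / (wi * lI)"
proof -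
  have "real wi * cJ \<le> wi * wj + wj * cI" using count by (metis of_nat_add of_nat_le_iff of_nat_mult)
  then have "cJ - real wj \<le> wj * cI / wi" using pos by (simp add: field_simps)
  then have "(cJ - real wj) * lJ \<le> (wj * cI / wi) * lJ"
    using pos by (intro mult_right_mono) auto
  then have "DJ - wj * lJ \<le> (wj * cI / wi) * lJ"
    using DJ by (simp add: algebra_simps)
  then have "pos_part (DJ - wj * lJ) \<le> (wj * cI / wi) * lJ"
    using pos by (simp add: pos_part_def)
  then have "pos_part (DJ - wj * lJ) / (wj * lJ) \<le> cI / wi"
    using pos by (simp add: divide_simps mult.commute mult.left_commute)
  also have "\<dots> \<le> DI / (wi * lI)"
    using DI pos by (simp add: divide_simps mult.commute)
  finally show ?thesis .
qed

lemma length_filter_iwrr_round: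
  assumes "k < n" "\<forall>k<n. 0 < w k"
  shows "length (filter ((=) k) (iwrr_round n w)) = w k"
proof -
  define M where "M = Max (w ` {..<n})"
  have "w k \<le> M" unfolding M_def using assms by auto
  then have cycles: "{1..<Suc M} \<inter> {c. c \<le> w k} = {1..w k}" by auto
  have per_cycle: "length (filter ((=) k) (filter (\<lambda>x. c \<le> w x) [0..<n]))
                   = (if c \<le> w k then 1 else 0)" for c
  proof -
    have "length (filter (\<lambda>x. c \<le> w x \<and> k = x) [0..<n])
          = card ({x. c \<le> w x \<and> k = x} \<inter> set [0..<n])"
      by (rule distinct_length_filter) simp
    also have "{x. c \<le> w x \<and> k = x} \<inter> set [0..<n] = (if c \<le> w k then {k} else {})"
      using assms by auto
    finally show ?thesis by (simp add: filter_filter)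
  qed
  have "length (filter ((=) k) (iwrr_round n w))
        = (\<Sum>c\<leftarrow>[1..<Suc M]. length (filter ((=) k) (filter (\<lambda>x. c \<le> w x) [0..<n])))"
    unfolding iwrr_round_def M_def by (simp add: filter_concat length_concat comp_def)
  also have "\<dots> = (\<Sum>c\<in>{1..<Suc M}. if c \<le> w k then 1 else 0)"
    unfolding per_cycle by (simp add: sum_set_upt_conv_sum_list_nat[symmetric])
  also have "\<dots> = (\<Sum>c\<in>{1..<Suc M} \<inter> {c. c \<le> w k}. 1)"
    by (subst sum.inter_restrict) auto
  also have "\<dots> = w k" unfolding cycles by simp
  finally show ?thesis .
qed

lemma iwrr_round_nonempty:
  assumes "k < n" "\<forall>k<n. 0 < w k"
  shows "0 < length (iwrr_round n w)"
  using length_filter_iwrr_round[OF assms] assms length_filter_le[of "(=) k" "iwrr_round n w"]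
  by auto

lemma card_visits_windows:
  assumes "k < n" "\<forall>k<n. 0 < w k"
  shows "card {m \<in> {p..<p + q * length (iwrr_round n w)}. slot_flow n w m = k} = q * w k"
proof -
  let ?R = "iwrr_round n w"
  have periodic: "slot_flow n w (m + length ?R) = k \<longleftrightarrow> slot_flow n w m = k" for m
    by (simp add: slot_flow_def)
  have "card {m \<in> {..<length ?R}. slot_flow n w m = k} = card {r. r < length ?R \<and> ?R ! r = k}"
    by (rule arg_cong[where f = card]) (auto simp: slot_flow_def)
  also have "\<dots> = w k"
    using length_filter_iwrr_round[OF assms] by (simp add: length_filter_conv_card eq_commute)
  finally show ?thesis
    using card_periodic_windows[of "\<lambda>m. slot_flow n w m = k", OF periodic] by simp
qed

lemma card_visits_lower:
  assumes "k < n" "\<forall>k<n. 0 < w k"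
  shows "(b - a) div length (iwrr_round n w) * w k \<le> card {m \<in> {a..<b}. slot_flow n w m = k}"
proof -
  define L where "L = length (iwrr_round n w)"
  define q where "q = (b - a) div L"
  have "q * L \<le> b - a" unfolding q_def by (rule div_times_less_eq_dividend)
  then have window: "{a..<a + q * L} \<subseteq> {a..<b}" by (cases "a \<le> b") auto
  have "q * w k = card {m \<in> {a..<a + q * L}. slot_flow n w m = k}"
    unfolding L_def using card_visits_windows[OF assms] by simp
  also have "\<dots> \<le> card {m \<in> {a..<b}. slot_flow n w m = k}"
    using window by (intro card_mono) auto
  finally show ?thesis unfolding q_def L_def .
qed

lemma card_visits_upper:
  assumes "k < n" "\<forall>k<n. 0 < w k"
  shows "card {m \<in> {a..b}. slot_flow n w m = k} \<le> Suc ((b - a) div length (iwrr_round n w)) * w k"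
proof -
  define L where "L = length (iwrr_round n w)"
  define q where "q = (b - a) div L"
  have "(b - a) mod L < L" using iwrr_round_nonempty[OF assms] unfolding L_def by simp
  moreover have "q * L + (b - a) mod L = b - a" unfolding q_def by (rule div_mult_mod_eq)
  ultimately have window: "{a..b} \<subseteq> {a..<a + Suc q * L}" by auto
  have "card {m \<in> {a..b}. slot_flow n w m = k} \<le> card {m \<in> {a..<a + Suc q * L}. slot_flow n w m = k}"
    using window by (intro card_mono) auto
  also have "\<dots> = Suc q * w k" unfolding L_def using card_visits_windows[OF assms] .
  finally show ?thesis unfolding q_def L_def .
qed

lemma iwrr_exec_visit_mono: "iwrr_exec n w arr v busy fin \<Longrightarrow> m \<le> m' \<Longrightarrow> v m \<le> v m'"
  unfolding iwrr_exec_def by (metis lift_Suc_mono_le)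

lemma iwrr_exec_busy_iff:
  "iwrr_exec n w arr v busy fin \<Longrightarrow>
   busy m \<longleftrightarrow> served n w busy (slot_flow n w m) m < card {p. arr (slot_flow n w m) p \<le> v m}"
  unfolding iwrr_exec_def by blast

lemma iwrr_exec_fin:
  "iwrr_exec n w arr v busy fin \<Longrightarrow> busy m \<Longrightarrow> v m < fin m \<and> fin m \<le> v (Suc m)"
  unfolding iwrr_exec_def by blast

lemma served_strict_mono:
  assumes "m1 < m2" "busy m1" "slot_flow n w m1 = k"
  shows "served n w busy k m1 < served n w busy k m2"
  unfolding served_def using assms by (intro psubset_card_mono) auto

lemma inj_on_served: "inj_on (served n w busy k) {m. busy m \<and> slot_flow n w m = k}"
proof (rule inj_onI)
  fix x y
  assume "x \<in> {m. busy m \<and> slot_flow n w m = k}" "y \<in> {m. busy m \<and> slot_flow n w m = k}"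
    and "served n w busy k x = served n w busy k y"
  then show "x = y"
    using served_strict_mono[of x y busy n w k] served_strict_mono[of y x busy n w k]
    by (cases x y rule: linorder_cases) auto
qed

lemma served_image:
  "served n w busy k ` {m'. m' < m \<and> slot_flow n w m' = k \<and> busy m'} = {..<served n w busy k m}"
proof (rule card_subset_eq)
  let ?B = "{m'. m' < m \<and> slot_flow n w m' = k \<and> busy m'}"
  have inj: "inj_on (served n w busy k) ?B"
    using inj_on_served by (rule inj_on_subset) auto
  show "served n w busy k ` ?B \<subseteq> {..<served n w busy k m}"
    using served_strict_mono[of _ m busy n w k] by auto
  show "card (served n w busy k ` ?B) = card {..<served n w busy k m}"
    using card_image[OF inj] by (simp add: served_def)
qed simp

lemma finite_departures_before:
  assumes exec: "iwrr_exec n w arr v busy fin" and arr_finite: "finite {p. arr k p < t}"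
  shows "finite {m. busy m \<and> slot_flow n w m = k \<and> fin m < t}"
proof -
  let ?D = "{m. busy m \<and> slot_flow n w m = k \<and> fin m < t}"
  have "served n w busy k ` ?D \<subseteq> {..<card {p. arr k p < t}}"
  proof
    fix x assume "x \<in> served n w busy k ` ?D"
    then obtain m where m: "m \<in> ?D" "x = served n w busy k m" by auto
    have "v m < t" using iwrr_exec_fin[OF exec, of m] m by auto
    then have "card {p. arr k p \<le> v m} \<le> card {p. arr k p < t}"
      using arr_finite by (intro card_mono) auto
    moreover have "served n w busy k m < card {p. arr k p \<le> v m}"
      using iwrr_exec_busy_iff[OF exec, of m] m by auto
    ultimately show "x \<in> {..<card {p. arr k p < t}}" using m by auto
  qed
  then have "finite (served n w busy k ` ?D)" by (rule finite_subset) simp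
  moreover have "inj_on (served n w busy k) ?D"
    using inj_on_served by (rule inj_on_subset) auto
  ultimately show ?thesis by (blast dest: finite_imageD)
qed

definition departure_slots ::
  "nat \<Rightarrow> (nat \<Rightarrow> nat) \<Rightarrow> (nat \<Rightarrow> bool) \<Rightarrow> (nat \<Rightarrow> real) \<Rightarrow> nat \<Rightarrow> real \<Rightarrow> real \<Rightarrow> nat set"
  where "departure_slots n w busy fin k s t = {m. busy m \<and> slot_flow n w m = k \<and> s \<le> fin m \<and> fin m < t}"

lemma finite_departure_slots:
  assumes "iwrr_exec n w arr v busy fin" "finite {p. arr k p < t}"
  shows "finite (departure_slots n w busy fin k s t)"
  by (rule finite_subset[OF _ finite_departures_before[OF assms]]) (auto simp: departure_slots_def)

lemma cum_dep_diff:
  assumes exec: "iwrr_exec n w arr v busy fin" and arr_finite: "finite {p. arr k p < t}"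
    and "s \<le> t"
  shows "cum_dep n w busy fin len k t - cum_dep n w busy fin len k s
         = (\<Sum>m\<in>departure_slots n w busy fin k s t. len k (served n w busy k m))"
proof -
  have "departure_slots n w busy fin k s t
        = {m. busy m \<and> slot_flow n w m = k \<and> fin m < t} - {m. busy m \<and> slot_flow n w m = k \<and> fin m < s}"
    by (auto simp: departure_slots_def)
  moreover have "{m. busy m \<and> slot_flow n w m = k \<and> fin m < s} \<subseteq> {m. busy m \<and> slot_flow n w m = k \<and> fin m < t}"
    using \<open>s \<le> t\<close> by auto
  ultimately show ?thesis
    unfolding cum_dep_def using finite_departures_before[OF exec arr_finite] by (simp add: sum_diff)
qed

lemma backlogged_visit_busy:
  assumes exec: "iwrr_exec n w arr v busy fin"
    and len_nonneg: "\<And>p. 0 \<le> len i p"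
    and fifo: "mono (arr i)"
    and arr_finite: "\<And>\<tau>. finite {p. arr i p < \<tau>}"
    and backlogged: "\<forall>\<tau>. s < \<tau> \<and> \<tau> \<le> t \<longrightarrow> cum_dep n w busy fin len i \<tau> < cum_arr arr len i \<tau>"
    and visit: "slot_flow n w m = i" "s \<le> v m" "v m < t"
  shows "busy m"
proof (rule ccontr)
  txt \<open>An idle visit means every packet arrived by v m is already served; just after v m,
    before the next arrival, departures would then catch up with arrivals.\<close>
  assume "\<not> busy m"
  then have unserved: "card {p. arr i p \<le> v m} \<le> served n w busy i m"
    using iwrr_exec_busy_iff[OF exec, of m] visit(1) by simp
  obtain \<tau> where \<tau>: "v m < \<tau>" "\<tau> \<le> t"
    and gap: "\<And>y. y \<in> arr i ` {p. arr i p < t} \<Longrightarrow> y < \<tau> \<Longrightarrow> y \<le> v m"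
    using finite_gap_above[of "arr i ` {p. arr i p < t}" "v m" t] arr_finite visit(3) by blast
  have "finite {p. arr i p \<le> v m}"
    by (rule finite_subset[OF _ arr_finite[of t]]) (use visit(3) in auto)
  moreover have "{p. arr i p < \<tau>} \<subseteq> {p. arr i p \<le> v m}" using gap \<tau>(2) by fastforce
  ultimately have arrived: "{p. arr i p < \<tau>} \<subseteq> {..<served n w busy i m}"
    using mono_sublevel_subset_lessThan[OF fifo] unserved by fastforce
  define B where "B = {m'. m' < m \<and> slot_flow n w m' = i \<and> busy m'}"
  have "cum_arr arr len i \<tau> \<le> (\<Sum>p<served n w busy i m. len i p)"
    unfolding cum_arr_def using arrived len_nonneg by (intro sum_mono2) auto
  also have "\<dots> = (\<Sum>m'\<in>B. len i (served n w busy i m'))"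
  proof -
    have "inj_on (served n w busy i) B"
      using inj_on_served by (rule inj_on_subset) (auto simp: B_def)
    then show ?thesis
      using sum.reindex[of "served n w busy i" B "len i"] served_image[of n w busy i m]
      by (simp add: B_def)
  qed
  also have "\<dots> \<le> cum_dep n w busy fin len i \<tau>"
    unfolding cum_dep_def
  proof (intro sum_mono2)
    show "finite {m. busy m \<and> slot_flow n w m = i \<and> fin m < \<tau>}"
      using finite_departures_before[OF exec arr_finite] .
    show "B \<subseteq> {m. busy m \<and> slot_flow n w m = i \<and> fin m < \<tau>}"
    proof
      fix m' assume "m' \<in> B"
      then have "fin m' \<le> v (Suc m')" "v (Suc m') \<le> v m" "busy m'" "slot_flow n w m' = i"
        using iwrr_exec_fin[OF exec, of m'] iwrr_exec_visit_mono[OF exec, of "Suc m'" m]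
        by (auto simp: B_def)
      then show "m' \<in> {m. busy m \<and> slot_flow n w m = i \<and> fin m < \<tau>}" using \<tau>(1) by auto
    qed
  qed (use len_nonneg in auto)
  finally show False using backlogged visit(2) \<tau> by force
qed

lemma visit_between_departures:
  assumes exec: "iwrr_exec n w arr v busy fin"
    and busy_visits: "\<And>m. slot_flow n w m = i \<Longrightarrow> s \<le> v m \<Longrightarrow> v m < t \<Longrightarrow> busy m"
    and a: "a \<in> departure_slots n w busy fin j s t" and b: "b \<in> departure_slots n w busy fin j s t"
    and m: "a < m" "m < b" "slot_flow n w m = i"
  shows "m \<in> departure_slots n w busy fin i s t"
proof -
  have "s \<le> fin a" "fin a \<le> v (Suc a)" "v (Suc a) \<le> v m"
    using a iwrr_exec_fin[OF exec, of a] iwrr_exec_visit_mono[OF exec, of "Suc a" m] m(1)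
    by (auto simp: departure_slots_def)
  then have start: "s \<le> v m" by linarith
  have "v (Suc m) \<le> v b" "v b < fin b" "fin b < t"
    using b iwrr_exec_fin[OF exec, of b] iwrr_exec_visit_mono[OF exec, of "Suc m" b] m(2)
    by (auto simp: departure_slots_def)
  then have finish: "v (Suc m) < t" by linarith
  have "busy m"
    using busy_visits[OF m(3) start] finish iwrr_exec_visit_mono[OF exec, of m "Suc m"] by simp
  then show ?thesis
    using iwrr_exec_fin[OF exec, of m] start finish m(3) unfolding departure_slots_def by auto
qed

lemma card_departure_slots_le:
  assumes exec: "iwrr_exec n w arr v busy fin"
    and w_pos: "\<forall>k<n. 0 < w k"
    and ij: "i < n" "j < n" "j \<noteq> i"
    and busy_visits: "\<And>m. slot_flow n w m = i \<Longrightarrow> s \<le> v m \<Longrightarrow> v m < t \<Longrightarrow> busy m"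
    and fin_I: "finite (departure_slots n w busy fin i s t)"
    and fin_J: "finite (departure_slots n w busy fin j s t)"
  shows "w i * card (departure_slots n w busy fin j s t)
         \<le> w i * w j + w j * card (departure_slots n w busy fin i s t)"
proof (cases "departure_slots n w busy fin j s t = {}")
  case True
  then show ?thesis by simp
next
  case False
  let ?I = "departure_slots n w busy fin i s t" and ?J = "departure_slots n w busy fin j s t"
  define a where "a = Min ?J"
  define b where "b = Max ?J"
  define q where "q = (b - a) div length (iwrr_round n w)"
  have a: "a \<in> ?J" and b: "b \<in> ?J"
    unfolding a_def b_def using fin_J False by simp_all
  have "card ?J \<le> card {m \<in> {a..b}. slot_flow n w m = j}"
    using fin_J unfolding a_def b_def by (intro card_mono) (auto simp: departure_slots_def)
  also have "\<dots> \<le> Suc q * w j"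
    unfolding q_def by (rule card_visits_upper[OF ij(2) w_pos])
  finally have upper: "card ?J \<le> Suc q * w j" .
  have "q * w i \<le> card {m \<in> {a..<b}. slot_flow n w m = i}"
    unfolding q_def by (rule card_visits_lower[OF ij(1) w_pos])
  also have "\<dots> \<le> card ?I"
  proof (intro card_mono[OF fin_I] subsetI)
    fix m assume m: "m \<in> {m \<in> {a..<b}. slot_flow n w m = i}"
    then have "a \<noteq> m" using a ij(3) by (auto simp: departure_slots_def)
    then show "m \<in> ?I"
      using visit_between_departures[OF exec busy_visits a b] m by auto
  qed
  finally have lower: "q * w i \<le> card ?I" .
  have "w i * card ?J \<le> w i * w j + w j * (q * w i)"
    using mult_le_mono2[OF upper, of "w i"] by (simp add: algebra_simps)
  also have "\<dots> \<le> w i * w j + w j * card ?I"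
    using lower by simp
  finally show ?thesis .
qed

theorem mainTheorem4:
  fixes n :: nat and w :: "nat \<Rightarrow> nat"
    and lmin lmax :: "nat \<Rightarrow> real"
    and arr len :: "nat \<Rightarrow> nat \<Rightarrow> real"
    and v fin :: "nat \<Rightarrow> real" and busy :: "nat \<Rightarrow> bool"
    and i j :: nat and s t :: real
  assumes w_pos: "\<forall>k<n. 0 < w k"
    and l_bounds: "\<forall>k<n. 0 < lmin k \<and> lmin k \<le> lmax k"
    and len_bounds: "\<forall>k<n. \<forall>p. lmin k \<le> len k p \<and> len k p \<le> lmax k"
    and arr_nonneg: "\<forall>k<n. \<forall>p. 0 \<le> arr k p"
    and fifo: "\<forall>k<n. mono (arr k)"
    and arr_finite: "\<forall>k<n. \<forall>\<tau>. finite {p. arr k p < \<tau>}"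
    and exec: "iwrr_exec n w arr v busy fin"
    and ij: "i < n" "j < n" "j \<noteq> i"
    and st: "s \<le> t"
    and backlogged: "\<forall>\<tau>. s < \<tau> \<and> \<tau> \<le> t \<longrightarrow>
                       cum_dep n w busy fin len i \<tau> < cum_arr arr len i \<tau>"
  shows "(cum_dep n w busy fin len i t - cum_dep n w busy fin len i s) / (real (w i) * lmin i)
         \<ge> pos_part ((cum_dep n w busy fin len j t - cum_dep n w busy fin len j s)
                       - real (w j) * lmax j) / (real (w j) * lmax j)"
proof -
  let ?I = "departure_slots n w busy fin i s t" and ?J = "departure_slots n w busy fin j s t"
  have "0 \<le> len i p" for p using l_bounds len_bounds ij(1) by (meson less_le_trans less_imp_le)
  then have "busy m" if "slot_flow n w m = i" "s \<le> v m" "v m < t" for m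
    using backlogged_visit_busy[OF exec _ _ _ backlogged] that fifo arr_finite ij(1) by blast
  then have count: "w i * card ?J \<le> w i * w j + w j * card ?I"
    using card_departure_slots_le[OF exec w_pos ij] finite_departure_slots[OF exec] arr_finite ij
    by blast
  have "cum_dep n w busy fin len j t - cum_dep n w busy fin len j s \<le> card ?J * lmax j"
    using cum_dep_diff[OF exec _ st] arr_finite len_bounds ij(2) by (simp add: sum_bounded_above)
  moreover have "card ?I * lmin i \<le> cum_dep n w busy fin len i t - cum_dep n w busy fin len i s"
    using cum_dep_diff[OF exec _ st] arr_finite len_bounds ij(1) by (simp add: sum_bounded_below)
  moreover have "0 < lmin i" "0 < lmax j" using l_bounds ij by (auto intro: less_le_trans)
  ultimately show ?thesis
    using bandwidth_share_arith[OF _ _ _ _ count] w_pos ij by simp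
qed

end
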